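(* For $k\in\mathbb{N}$ let $D(k)=\dfrac{1}{4}\cdot\dfrac{3^{2k+2}-9-40k-32k^{2}}{(2k+2)!}$. (i) For every $x\in(0,\pi/2)$ and every $n\in\mathbb{N}$, $$2+\frac{1}{\cos x}\sum_{k=2}^{2n+1}(-1)^{k}D(k)\,x^{2k}<\Big(\frac{\sin x}{x}\Big)^{2}+\frac{\tan x}{x}<2+\frac{1}{\cos x}\sum_{k=2}^{2n}(-1)^{k}D(k)\,x^{2k}.$$ (ii) For every $x\in(0,\pi/2)$ and every integer $m\ge 2$, $$\Big|\Big(\frac{\sin x}{x}\Big)^{2}+\frac{\tan x}{x}-\Big(2+\frac{1}{\cos x}\sum_{k=2}^{m}(-1)^{k}D(k)\,x^{2k}\Big)\Big|<D(m+1)\,\frac{x^{2m+2}}{\cos x}.$$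
   Context: $\mathbb{N}=\{1,2,3,\dots\}$. *)

theory Defs
  imports Complex_Main
begin

definition D :: "nat \<Rightarrow> real" where
  "D k = (1/4) * ((3::real) ^ (2*k+2) - 9 - 40 * real k - 32 * (real k)^2) / fact (2*k+2)"

end

(*
  Expanding cos x / 4 - cos (3x) / 4 = cos x sin^2 x, x sin x and 2 x^2 cos x into their Taylor
  series shows that cos x ((sin x / x)^2 + tan x / x - 2) is the alternating power series
  sum_k (-1)^k D(k) x^(2k), whose terms with k = 0, 1 vanish. Since 4 D(k+1) < D(k) for k >= 2
  and x^2 < 4 on (0, pi/2), the terms D(k) x^(2k) decrease strictly from k = 2 on, so every
  remainder of the series has the sign of its first term and is smaller in absolute value.
*)
theory Submission
  imports Defs
begin

lemma alternating_remainder_pos: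
  fixes a :: "nat \<Rightarrow> real"
  assumes sums: "(\<lambda>k. (-1)^k * a k) sums S" and dec: "\<And>k. m \<le> k \<Longrightarrow> a (Suc k) < a k"
  shows "0 < (-1)^m * (S - (\<Sum>k<m. (-1)^k * a k))"
proof -
  define R where "R = S - (\<Sum>k<m. (-1)^k * a k)"
  have "(\<lambda>i. (-1)^m * ((-1)^(i+m) * a (i+m))) sums ((-1)^m * R)"
    unfolding R_def using sums sums_iff_shift[of "\<lambda>k. (-1)^k * a k" m] by (intro sums_mult) simp
  moreover have "(-1)^m * ((-1)^(i+m) * a (i+m)) = (-1)^i * a (i+m)" for i :: nat
    by (simp add: power_add mult_ac flip: power_mult_distrib)
  ultimately have "(\<lambda>i. (-1)^i * a (i+m)) sums ((-1)^m * R)" by simp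
  \<comment> \<open>grouping the tail in consecutive pairs leaves a series of positive terms\<close>
  from sums_group[OF this, of 2]
  have pairs: "(\<lambda>j. a (2*j+m) - a (Suc (2*j+m))) sums ((-1)^m * R)"
    by (simp add: atLeastLessThan_nat_numeral mult.commute)
  have "0 < suminf (\<lambda>j. a (2*j+m) - a (Suc (2*j+m)))"
    using pairs dec by (intro suminf_pos) (auto simp: sums_iff)
  then show ?thesis using pairs sums_unique R_def by metis
qed

lemma alternating_remainder_less:
  fixes a :: "nat \<Rightarrow> real"
  assumes sums: "(\<lambda>k. (-1)^k * a k) sums S" and dec: "\<And>k. m \<le> k \<Longrightarrow> a (Suc k) < a k"
  shows "(-1)^m * (S - (\<Sum>k<m. (-1)^k * a k)) < a m"
proof -
  have "0 < (-1)^Suc m * (S - (\<Sum>k<Suc m. (-1)^k * a k))"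
    using dec by (intro alternating_remainder_pos[OF sums]) simp
  then show ?thesis by (simp add: algebra_simps flip: power_add mult_2)
qed

definition D_num :: "nat \<Rightarrow> real" where
  "D_num k = 3 ^ (2*k+2) - 9 - 40 * real k - 32 * (real k)^2"

lemma D_eq_D_num: "D k = D_num k / (4 * fact (2*k+2))"
  by (simp add: D_def D_num_def)

lemma D_num_Suc: "D_num (Suc k) = 9 * D_num k + 256 * real k * (real k + 1)"
  by (simp add: D_num_def power_add power_mult algebra_simps power2_eq_square)

lemma D_num_lower_bound: "k \<ge> 2 \<Longrightarrow> 64 * real k * (real k + 1) \<le> D_num k"
proof (induction k rule: dec_induct)
  case base
  then show ?case by (simp add: D_num_def)
next
  case (step n)
  then have "real n + 2 \<le> 13 * real n"
    by simp
  then have "64 * (real n + 1) * (real n + 2) \<le> 64 * (real n + 1) * (13 * real n)"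
    by (intro mult_left_mono) auto
  with step.IH show ?case
    by (simp add: D_num_Suc algebra_simps)
qed

lemma D_num_pos: "k \<ge> 2 \<Longrightarrow> 0 < D_num k"
proof -
  assume k: "k \<ge> 2"
  then have "0 < 64 * real k * (real k + 1)"
    by simp
  with D_num_lower_bound[OF k] show ?thesis
    by linarith
qed

lemma D_0_1: "D 0 = 0" "D 1 = 0"
  by (simp_all add: D_def)

lemma D_pos: "k \<ge> 2 \<Longrightarrow> 0 < D k"
  using D_num_pos by (simp add: D_eq_D_num)

lemma D_Suc_less: "k \<ge> 2 \<Longrightarrow> 4 * D (Suc k) < D k"
proof -
  assume k: "k \<ge> 2"
  have "(8::real) * 7 \<le> (2*real k+4)*(2*real k+3)"
    using k by (intro mult_mono) auto
  then have "20 * D_num k \<le> ((2*real k+4)*(2*real k+3) - 36) * D_num k"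
    using D_num_pos[OF k] by (intro mult_right_mono) auto
  moreover have "0 < real k * (real k + 1)"
    using k by simp
  ultimately have "4 * D_num (Suc k) < (2*real k+4)*(2*real k+3) * D_num k"
    using D_num_lower_bound[OF k] by (simp add: D_num_Suc algebra_simps)
  moreover have "fact (2 * Suc k + 2) = (2*real k+4)*(2*real k+3) * (fact (2*k+2) :: real)"
    by (simp add: fact_Suc algebra_simps)
  ultimately show ?thesis
    unfolding D_eq_D_num by (simp add: divide_simps) (simp add: mult_ac)
qed

lemma inverse_fact_Suc: "1 / fact m = real (Suc m) / (fact (Suc m) :: real)"
  by simp

lemma D_eq_Taylor_coeffs:
  "D n = (3^(2*n+2) - 1) / (4 * fact (2*n+2)) + 1 / fact (2*n+1) - 2 / fact (2*n)"
proof -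
  have odd: "1 / fact (2*n+1) = (2*real n+2) / (fact (2*n+2) :: real)"
    using inverse_fact_Suc[of "2*n+1"] by (simp del: fact_Suc)
  have "1 / fact (2*n) = (2*real n+1) * (1 / fact (2*n+1) :: real)"
    using inverse_fact_Suc[of "2*n"] by (simp del: fact_Suc)
  also have "\<dots> = (2*real n+2) * (2*real n+1) / fact (2*n+2)"
    unfolding odd by simp
  finally have even: "1 / fact (2*n) = (2*real n+2) * (2*real n+1) / (fact (2*n+2) :: real)" .
  define F where "F = (fact (2*n+2) :: real)"
  have "F \<noteq> 0"
    unfolding F_def by simp
  have "(3^(2*n+2) - 1) / (4 * fact (2*n+2)) + 1 / fact (2*n+1) - 2 * (1 / fact (2*n))
      = (3^(2*n+2) - 1) / (4 * F) + (2*real n+2) / F - 2 * ((2*real n+2) * (2*real n+1) / F)"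
    unfolding odd even F_def ..
  also have "\<dots> = ((3::real)^(2*n+2) - 9 - 40 * real n - 32 * (real n)^2) / (4 * F)"
    using \<open>F \<noteq> 0\<close> by (simp add: field_simps power2_eq_square)
  finally show ?thesis
    unfolding D_def F_def by simp
qed

lemma one_sub_cos_paired: "(\<lambda>n. (-1)^n / fact (2*n+2) * x^(2*n+2)) sums (1 - cos x)" for x :: real
proof -
  have "(\<lambda>n. - ((-1)^n / fact (2*n) * x^(2*n))) sums (- cos x)"
    using cos_paired sums_minus by blast
  then have "(\<lambda>n. - ((-1)^Suc n / fact (2 * Suc n) * x^(2 * Suc n))) sums (1 - cos x)"
    by (subst sums_Suc_iff) simp
  then show ?thesis
    by (simp del: fact_Suc)
qed

lemma cos_sub_cos_treble: "cos x / 4 - cos (3*x) / 4 = cos x * (sin x)^2" for x :: real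
  unfolding cos_treble_cos sin_squared_eq by (simp add: power3_eq_cube power2_eq_square field_simps)

lemma sums_D_series_shifted:
  fixes x :: real
  shows "(\<lambda>n. (-1)^n * D n * x^(2*n+2)) sums (cos x * (sin x)^2 + x * sin x - 2 * x^2 * cos x)"
proof -
  have "(\<lambda>n. ((-1)^n / fact (2*n+2) * (3*x)^(2*n+2) - (-1)^n / fact (2*n+2) * x^(2*n+2)) / 4)
      sums (((1 - cos (3*x)) - (1 - cos x)) / 4)"
    by (intro sums_divide sums_diff one_sub_cos_paired)
  then have "(\<lambda>n. (-1)^n * ((3^(2*n+2) - 1) / (4 * fact (2*n+2))) * x^(2*n+2)) sums (cos x * (sin x)^2)"
    unfolding cos_sub_cos_treble[symmetric] by (simp add: power_mult_distrib algebra_simps diff_divide_distrib del: fact_Suc)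
  moreover have "(\<lambda>n. (-1)^n * (1 / fact (2*n+1)) * x^(2*n+2)) sums (x * sin x)"
    using sums_mult[OF sin_paired[of x], of x] by (simp add: mult_ac)
  moreover have "(\<lambda>n. (-1)^n * (2 / fact (2*n)) * x^(2*n+2)) sums (2 * x^2 * cos x)"
    using sums_mult[OF cos_paired[of x], of "2 * x^2"] by (simp add: power_add power2_eq_square mult_ac)
  ultimately have "(\<lambda>n. (-1)^n * ((3^(2*n+2) - 1) / (4 * fact (2*n+2))) * x^(2*n+2)
      + (-1)^n * (1 / fact (2*n+1)) * x^(2*n+2) - (-1)^n * (2 / fact (2*n)) * x^(2*n+2))
      sums (cos x * (sin x)^2 + x * sin x - 2 * x^2 * cos x)"
    by (intro sums_diff sums_add)
  then show ?thesis
    by (simp only: D_eq_Taylor_coeffs algebra_simps)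
qed

lemma sums_D_series:
  fixes x :: real
  assumes "x \<noteq> 0" and "cos x \<noteq> 0"
  shows "(\<lambda>k. (-1)^k * D k * x^(2*k)) sums (cos x * ((sin x / x)^2 + tan x / x - 2))"
proof -
  have "(\<lambda>k. (-1)^k * D k * x^(2*k+2) / x^2) sums ((cos x * (sin x)^2 + x * sin x - 2 * x^2 * cos x) / x^2)"
    by (intro sums_divide sums_D_series_shifted)
  moreover have "(cos x * (sin x)^2 + x * sin x - 2 * x^2 * cos x) / x^2
      = cos x * ((sin x / x)^2 + tan x / x - 2)"
    using assms by (simp add: tan_def field_simps power2_eq_square)
  ultimately show ?thesis
    using assms by (simp add: power_add power2_eq_square mult.assoc)
qed

lemma D_series_error_bounds:
  fixes x :: real
  assumes "0 < x" and "x < pi/2" and "1 \<le> m"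
  defines "E \<equiv> (sin x / x)^2 + tan x / x - (2 + (1 / cos x) * (\<Sum>k=2..m. (-1)^k * D k * x^(2*k)))"
  shows "0 < (-1)^Suc m * E \<and> (-1)^Suc m * E < D (m+1) * x^(2*m+2) / cos x"
proof -
  define a where "a k = D k * x^(2*k)" for k
  define S where "S = cos x * ((sin x / x)^2 + tan x / x - 2)"
  have cos: "0 < cos x"
    using assms by (intro cos_gt_zero) auto
  have sums: "(\<lambda>k. (-1)^k * a k) sums S"
    using sums_D_series[of x] assms cos unfolding a_def S_def by (simp add: mult.assoc)
  have "x^2 < 2^2"
    using assms pi_half_less_two by (intro power_strict_mono) auto
  then have dec: "a (Suc k) < a k" if "Suc m \<le> k" for k
  proof -
    have "a (Suc k) = (D (Suc k) * x^2) * x^(2*k)"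
      unfolding a_def by (simp add: power_add power2_eq_square mult_ac)
    also have "\<dots> < (4 * D (Suc k)) * x^(2*k)"
      using that assms \<open>x^2 < 2^2\<close> D_pos[of "Suc k"] by (intro mult_strict_right_mono) auto
    also have "\<dots> < a k"
      unfolding a_def using that assms D_Suc_less[of k] by (intro mult_strict_right_mono) auto
    finally show ?thesis .
  qed
  have "(\<Sum>k=2..m. (-1)^k * a k) = (\<Sum>k<Suc m. (-1)^k * a k)"
    using \<open>1 \<le> m\<close> D_0_1
    by (simp add: lessThan_Suc_atMost atMost_atLeast0 sum.atLeast_Suc_atMost numeral_2_eq_2 a_def)
  moreover define R where "R = (-1)^Suc m * (S - (\<Sum>k<Suc m. (-1)^k * a k))"
  ultimately have "(-1)^Suc m * E = R / cos x"
    unfolding E_def S_def a_def using cos by (simp add: field_simps mult.assoc)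
  moreover have "0 < R"
    unfolding R_def by (rule alternating_remainder_pos[OF sums dec])
  moreover have "R < D (m+1) * x^(2*m+2)"
    using alternating_remainder_less[OF sums, of "Suc m"] dec unfolding R_def a_def by simp
  ultimately show ?thesis
    using cos by (simp add: divide_strict_right_mono)
qed

theorem theorem4:
  shows "(\<forall>x::real. \<forall>n::nat. 0 < x \<and> x < pi/2 \<and> n \<ge> 1 \<longrightarrow>
           2 + (1 / cos x) * (\<Sum>k=2..2*n+1. (-1)^k * D k * x^(2*k))
             < (sin x / x)^2 + tan x / x
         \<and> (sin x / x)^2 + tan x / x
             < 2 + (1 / cos x) * (\<Sum>k=2..2*n. (-1)^k * D k * x^(2*k)))
       \<and> (\<forall>x::real. \<forall>m::nat. 0 < x \<and> x < pi/2 \<and> m \<ge> 2 \<longrightarrow>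
           \<bar>(sin x / x)^2 + tan x / x - (2 + (1 / cos x) * (\<Sum>k=2..m. (-1)^k * D k * x^(2*k)))\<bar>
             < D (m+1) * x^(2*m+2) / cos x)"
proof (intro conjI allI impI)
  fix x :: real and n :: nat
  assume "0 < x \<and> x < pi/2 \<and> n \<ge> 1"
  then have "0 < (-1)^Suc (2*n+1) * ((sin x / x)^2 + tan x / x - (2 + (1 / cos x) * (\<Sum>k=2..2*n+1. (-1)^k * D k * x^(2*k))))"
    and "0 < (-1)^Suc (2*n) * ((sin x / x)^2 + tan x / x - (2 + (1 / cos x) * (\<Sum>k=2..2*n. (-1)^k * D k * x^(2*k))))"
    using D_series_error_bounds[of x "2*n+1"] D_series_error_bounds[of x "2*n"] by auto
  then show "2 + (1 / cos x) * (\<Sum>k=2..2*n+1. (-1)^k * D k * x^(2*k)) < (sin x / x)^2 + tan x / x"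
    and "(sin x / x)^2 + tan x / x < 2 + (1 / cos x) * (\<Sum>k=2..2*n. (-1)^k * D k * x^(2*k))"
    by simp_all
next
  fix x :: real and m :: nat
  assume "0 < x \<and> x < pi/2 \<and> m \<ge> 2"
  then show "\<bar>(sin x / x)^2 + tan x / x - (2 + (1 / cos x) * (\<Sum>k=2..m. (-1)^k * D k * x^(2*k)))\<bar>
             < D (m+1) * x^(2*m+2) / cos x" (is "\<bar>?E\<bar> < ?B")
  proof -
    have "\<bar>?E\<bar> = \<bar>(-1)^Suc m * ?E\<bar>"
      by (simp add: abs_mult)
    with D_series_error_bounds[of x m] \<open>0 < x \<and> x < pi/2 \<and> m \<ge> 2\<close> show ?thesis
      by auto
  qed
qed

end
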